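(* Let $K$ be the transition kernel of a Markov chain on a general state space, reversible with respect to $\pi$. For any $f\in L_2(\pi)$ with $\|f\|_{2,\pi}\neq0$ and every integer $n\ge1$, $$\frac{\|K^nf\|_{2,\pi}^2}{\|f\|_{2,\pi}^2}\ge\Big(\frac{\|Kf\|_{2,\pi}^2}{\|f\|_{2,\pi}^2}\Big)^n.$$
   Context: Reversibility: $K(x,dy)\pi(dx)=K(y,dx)\pi(dy)$. $(Kf)(x)=\int K(x,dy)f(y)$, $K^n f=K(K^{n-1}f)$. $\|f\|_{2,\pi}^2=\int f^2d\pi$. *)

theory Defs
  imports "HOL-Probability.Probability"
begin

definition markov_op :: "('a \<Rightarrow> 'a measure) \<Rightarrow> ('a \<Rightarrow> real) \<Rightarrow> 'a \<Rightarrow> real" where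
  "markov_op K f x = (\<integral>y. f y \<partial>(K x))"

definition l2_norm_sq :: "'a measure \<Rightarrow> ('a \<Rightarrow> real) \<Rightarrow> real" where
  "l2_norm_sq \<pi> f = (\<integral>x. (f x)\<^sup>2 \<partial>\<pi>)"

text \<open>Reversibility (detailed balance): K(x,dy) pi(dx) = K(y,dx) pi(dy) as measures on pairs,
  i.e. for all measurable A, B: int_A K(x,B) pi(dx) = int_B K(y,A) pi(dy).\<close>
definition reversible :: "'a measure \<Rightarrow> ('a \<Rightarrow> 'a measure) \<Rightarrow> bool" where
  "reversible \<pi> K \<longleftrightarrow> (\<forall>A\<in>sets \<pi>. \<forall>B\<in>sets \<pi>.
     (\<integral>\<^sup>+x\<in>A. emeasure (K x) B \<partial>\<pi>) = (\<integral>\<^sup>+y\<in>B. emeasure (K y) A \<partial>\<pi>))"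

end

theory Submission
  imports Defs
begin

text \<open>
  Write \<open>c k = \<parallel>K\<^sup>k f\<parallel>\<^sup>2\<close>. Reversibility makes \<open>K\<close> self-adjoint on \<open>L\<^sub>2(\<pi>)\<close>, so
  \<open>c (k+1) = \<langle>K\<^sup>k f, K\<^sup>k\<^sup>+\<^sup>2 f\<rangle>\<close>, and Cauchy-Schwarz gives \<open>c (k+1)\<^sup>2 \<le> c k * c (k+2)\<close>:
  the sequence \<open>c\<close> is log-convex. For a nonnegative log-convex sequence the ratios
  \<open>c (k+1) / c k\<close> increase, so \<open>c n / c 0\<close> dominates the \<open>n\<close>-th power of the first ratio.
  Self-adjointness comes from the symmetry of the joint law \<open>\<pi>(dx) K(x,dy)\<close> of two
  consecutive states of the stationary chain, which is exactly reversibility.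
\<close>

lemma log_convex_seq_cross_le:
  fixes c :: "nat \<Rightarrow> real"
  assumes nonneg: "\<And>k. c k \<ge> 0"
    and log_convex: "\<And>k. (c (Suc k))\<^sup>2 \<le> c k * c (Suc (Suc k))"
  shows "c 1 * c k \<le> c (Suc k) * c 0"
proof (induction k)
  case 0
  then show ?case by (simp add: mult.commute)
next
  case (Suc k)
  show ?case
  proof (cases "c k = 0")
    case True
    then have "c (Suc k) = 0" using log_convex[of k] by simp
    then show ?thesis using nonneg[of "Suc (Suc k)"] nonneg[of 0] by simp
  next
    case False
    then have "c k > 0" using nonneg[of k] by simp
    have "c k * (c 1 * c (Suc k)) = c (Suc k) * (c 1 * c k)" by (simp add: algebra_simps)
    also have "\<dots> \<le> c (Suc k) * (c (Suc k) * c 0)"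
      using Suc.IH nonneg[of "Suc k"] by (simp add: mult_left_mono)
    also have "\<dots> = (c (Suc k))\<^sup>2 * c 0" by (simp add: power2_eq_square)
    also have "\<dots> \<le> c k * c (Suc (Suc k)) * c 0"
      using log_convex[of k] nonneg[of 0] by (simp add: mult_right_mono)
    finally show ?thesis using \<open>c k > 0\<close> by (simp add: algebra_simps)
  qed
qed

lemma log_convex_seq_power_le:
  fixes c :: "nat \<Rightarrow> real"
  assumes nonneg: "\<And>k. c k \<ge> 0"
    and log_convex: "\<And>k. (c (Suc k))\<^sup>2 \<le> c k * c (Suc (Suc k))"
  shows "c 1 ^ Suc n \<le> c (Suc n) * c 0 ^ n"
proof (induction n)
  case 0
  then show ?case by simp
next
  case (Suc n)
  have "c 1 ^ Suc (Suc n) \<le> c 1 * (c (Suc n) * c 0 ^ n)"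
    using Suc.IH nonneg[of 1] by (simp add: mult_left_mono)
  also have "\<dots> = (c 1 * c (Suc n)) * c 0 ^ n" by simp
  also have "\<dots> \<le> (c (Suc (Suc n)) * c 0) * c 0 ^ n"
    using log_convex_seq_cross_le[of c, OF nonneg log_convex, of "Suc n"] nonneg[of 0]
    by (simp add: mult_right_mono)
  finally show ?case by simp
qed

lemma log_convex_seq_ratio_power_le:
  fixes c :: "nat \<Rightarrow> real"
  assumes nonneg: "\<And>k. c k \<ge> 0"
    and log_convex: "\<And>k. (c (Suc k))\<^sup>2 \<le> c k * c (Suc (Suc k))"
    and "c 0 \<noteq> 0" and "n \<ge> 1"
  shows "(c 1 / c 0) ^ n \<le> c n / c 0"
proof -
  obtain m where n: "n = Suc m" using \<open>n \<ge> 1\<close> by (cases n) auto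
  have pos: "c 0 > 0" using nonneg[of 0] \<open>c 0 \<noteq> 0\<close> by simp
  have "c 1 ^ n \<le> c n * c 0 ^ m"
    using log_convex_seq_power_le[of c, OF nonneg log_convex, of m] n by simp
  then have "c 1 ^ n / c 0 ^ n \<le> c n * c 0 ^ m / c 0 ^ n"
    using pos by (simp add: divide_right_mono)
  also have "\<dots> = c n / c 0" using pos n by (simp add: field_simps)
  finally show ?thesis by (simp add: power_divide)
qed

lemma Cauchy_Schwarz_integral:
  fixes u v :: "'b \<Rightarrow> real"
  assumes [measurable]: "u \<in> borel_measurable M" "v \<in> borel_measurable M"
    and u2: "integrable M (\<lambda>x. (u x)\<^sup>2)" and v2: "integrable M (\<lambda>x. (v x)\<^sup>2)"
  shows "(\<integral>x. u x * v x \<partial>M)\<^sup>2 \<le> (\<integral>x. (u x)\<^sup>2 \<partial>M) * (\<integral>x. (v x)\<^sup>2 \<partial>M)"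
proof -
  have abs_le: "ennreal \<bar>\<integral>x. u x * v x \<partial>M\<bar> \<le> (\<integral>\<^sup>+x. ennreal \<bar>u x\<bar> * ennreal \<bar>v x\<bar> \<partial>M)"
  proof (cases "integrable M (\<lambda>x. u x * v x)")
    case True
    then show ?thesis
      using integral_norm_bound_ennreal[OF True] by (simp add: abs_mult ennreal_mult)
  qed (simp add: not_integrable_integral_eq)
  have "ennreal (\<bar>\<integral>x. u x * v x \<partial>M\<bar>\<^sup>2) = (ennreal \<bar>\<integral>x. u x * v x \<partial>M\<bar>)\<^sup>2"
    by (simp add: ennreal_power)
  also have "\<dots> \<le> (\<integral>\<^sup>+x. ennreal \<bar>u x\<bar> * ennreal \<bar>v x\<bar> \<partial>M)\<^sup>2"
    using abs_le by (rule power_mono) simp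
  also have "\<dots> \<le> (\<integral>\<^sup>+x. ennreal \<bar>u x\<bar> ^ 2 \<partial>M) * (\<integral>\<^sup>+x. ennreal \<bar>v x\<bar> ^ 2 \<partial>M)"
    by (rule Cauchy_Schwarz_nn_integral) auto
  also have "\<dots> = ennreal ((\<integral>x. (u x)\<^sup>2 \<partial>M) * (\<integral>x. (v x)\<^sup>2 \<partial>M))"
    by (simp add: ennreal_power nn_integral_eq_integral[OF u2] nn_integral_eq_integral[OF v2]
        ennreal_mult integral_nonneg)
  finally show ?thesis by (simp add: integral_nonneg)
qed

locale markov_kernel =
  fixes \<pi> :: "'a measure" and K :: "'a \<Rightarrow> 'a measure"
  assumes prob_space: "prob_space \<pi>"
    and kernel: "K \<in> \<pi> \<rightarrow>\<^sub>M prob_algebra \<pi>"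
begin

lemma kernel_subprob[measurable]: "K \<in> \<pi> \<rightarrow>\<^sub>M subprob_algebra \<pi>"
  using kernel by (rule measurable_prob_algebraD)

lemma sets_kernel_eq[simp, measurable_cong]: "x \<in> space \<pi> \<Longrightarrow> sets (K x) = sets \<pi>"
  using sets_kernel[OF kernel_subprob] by blast

lemma space_kernel_eq[simp]: "x \<in> space \<pi> \<Longrightarrow> space (K x) = space \<pi>"
  using sets_eq_imp_space_eq[OF sets_kernel_eq] by blast

lemma prob_space_kernel: "x \<in> space \<pi> \<Longrightarrow> prob_space (K x)"
  using measurable_space[OF kernel] by (auto simp: space_prob_algebra)

lemma emeasure_kernel_space[simp]: "x \<in> space \<pi> \<Longrightarrow> emeasure (K x) (space \<pi>) = 1"
  using prob_space.emeasure_space_1[OF prob_space_kernel] by simp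

lemma measurable_Pair_kernel: "x \<in> space \<pi> \<Longrightarrow> Pair x \<in> K x \<rightarrow>\<^sub>M \<pi> \<Otimes>\<^sub>M \<pi>"
  by (subst measurable_cong_sets[OF sets_kernel_eq refl]) simp_all

lemma markov_op_measurable[measurable]:
  assumes [measurable]: "g \<in> borel_measurable \<pi>"
  shows "markov_op K g \<in> borel_measurable \<pi>"
  unfolding markov_op_def[abs_def]
  by (rule measurable_compose[OF kernel_subprob integral_measurable_subprob_algebra]) simp

text \<open>Jensen's inequality for \<open>t \<mapsto> t\<^sup>2\<close>, in a form that needs no integrability of \<open>g\<close>.\<close>

lemma markov_op_square_le:
  assumes [measurable]: "g \<in> borel_measurable \<pi>" and x: "x \<in> space \<pi>"
  shows "ennreal ((markov_op K g x)\<^sup>2) \<le> (\<integral>\<^sup>+y. ennreal ((g y)\<^sup>2) \<partial>K x)"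
proof (cases "integrable (K x) g")
  case True
  interpret Kx: prob_space "K x" using prob_space_kernel[OF x] .
  have "ennreal ((markov_op K g x)\<^sup>2) = (ennreal \<bar>markov_op K g x\<bar>)\<^sup>2"
    by (simp add: ennreal_power)
  also have "\<dots> \<le> (\<integral>\<^sup>+y. ennreal \<bar>g y\<bar> * 1 \<partial>K x)\<^sup>2"
    using integral_norm_bound_ennreal[OF True] unfolding markov_op_def
    by (intro power_mono) auto
  also have "\<dots> \<le> (\<integral>\<^sup>+y. ennreal \<bar>g y\<bar> ^ 2 \<partial>K x) * (\<integral>\<^sup>+y. 1 ^ 2 \<partial>K x)"
    using x by (intro Cauchy_Schwarz_nn_integral) auto
  also have "\<dots> = (\<integral>\<^sup>+y. ennreal ((g y)\<^sup>2) \<partial>K x)"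
    by (simp add: ennreal_power Kx.emeasure_space_1)
  finally show ?thesis .
qed (simp add: markov_op_def not_integrable_integral_eq)

definition step_pair :: "'a \<Rightarrow> ('a \<times> 'a) measure" where
  "step_pair x = distr (K x) (\<pi> \<Otimes>\<^sub>M \<pi>) (Pair x)"

definition joint :: "('a \<times> 'a) measure" where
  "joint = \<pi> \<bind> step_pair"

lemma step_pair_measurable: "step_pair \<in> \<pi> \<rightarrow>\<^sub>M subprob_algebra (\<pi> \<Otimes>\<^sub>M \<pi>)"
  unfolding step_pair_def by (rule measurable_distr2[OF _ kernel_subprob]) simp

lemma sets_joint[simp, measurable_cong]: "sets joint = sets (\<pi> \<Otimes>\<^sub>M \<pi>)"
  unfolding joint_def
  using sets_kernel[OF step_pair_measurable] prob_space.not_empty[OF prob_space]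
  by (intro sets_bind) auto

lemma space_joint[simp]: "space joint = space \<pi> \<times> space \<pi>"
  using sets_eq_imp_space_eq[OF sets_joint] by (simp add: space_pair_measure)

lemma nn_integral_joint:
  assumes [measurable]: "F \<in> borel_measurable (\<pi> \<Otimes>\<^sub>M \<pi>)"
  shows "(\<integral>\<^sup>+z. F z \<partial>joint) = (\<integral>\<^sup>+x. \<integral>\<^sup>+y. F (x, y) \<partial>K x \<partial>\<pi>)"
  unfolding joint_def
  by (subst nn_integral_bind[OF assms step_pair_measurable], intro nn_integral_cong)
    (simp add: step_pair_def nn_integral_distr measurable_Pair_kernel)

lemma integral_step_pair:
  fixes F :: "'a \<times> 'a \<Rightarrow> real"
  assumes [measurable]: "F \<in> borel_measurable (\<pi> \<Otimes>\<^sub>M \<pi>)" and x: "x \<in> space \<pi>"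
  shows "(\<integral>z. F z \<partial>step_pair x) = (\<integral>y. F (x, y) \<partial>K x)"
  unfolding step_pair_def using measurable_Pair_kernel[OF x] by (subst integral_distr) auto

lemma integral_kernel_measurable[measurable]:
  fixes F :: "'a \<times> 'a \<Rightarrow> real"
  assumes [measurable]: "F \<in> borel_measurable (\<pi> \<Otimes>\<^sub>M \<pi>)"
  shows "(\<lambda>x. \<integral>y. F (x, y) \<partial>K x) \<in> borel_measurable \<pi>"
proof -
  have "(\<lambda>x. \<integral>z. F z \<partial>step_pair x) \<in> borel_measurable \<pi>"
    by (rule measurable_compose[OF step_pair_measurable integral_measurable_subprob_algebra]) simp
  then show ?thesis by (rule measurable_cong[THEN iffD1, rotated]) (simp add: integral_step_pair)
qed

lemma nn_integral_kernel_measurable[measurable]: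
  assumes [measurable]: "F \<in> borel_measurable (\<pi> \<Otimes>\<^sub>M \<pi>)"
  shows "(\<lambda>x. \<integral>\<^sup>+y. F (x, y) \<partial>K x) \<in> borel_measurable \<pi>"
  by (rule nn_integral_measurable_subprob_algebra2[OF _ kernel_subprob]) simp

lemma borel_measurable_kernel_slice:
  assumes F: "F \<in> borel_measurable (\<pi> \<Otimes>\<^sub>M \<pi>)" and x: "x \<in> space \<pi>"
  shows "(\<lambda>y. F (x, y)) \<in> borel_measurable (K x)"
proof -
  have "(\<lambda>y. F (x, y)) \<in> borel_measurable \<pi>" using F x by measurable
  then show ?thesis by (simp add: measurable_cong_sets[OF sets_kernel_eq[OF x] refl])
qed

lemma swap_measurable[measurable]: "(\<lambda>(x, y). (y, x)) \<in> joint \<rightarrow>\<^sub>M \<pi> \<Otimes>\<^sub>M \<pi>"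
  by (simp add: measurable_cong_sets[OF sets_joint refl] measurable_pair_swap')

lemma emeasure_joint_Times:
  assumes A: "A \<in> sets \<pi>" and B: "B \<in> sets \<pi>"
  shows "emeasure joint (A \<times> B) = (\<integral>\<^sup>+x\<in>A. emeasure (K x) B \<partial>\<pi>)"
proof -
  have "emeasure joint (A \<times> B) = (\<integral>\<^sup>+z. indicator (A \<times> B) z \<partial>joint)"
    using A B by simp
  also have "\<dots> = (\<integral>\<^sup>+x. \<integral>\<^sup>+y. indicator A x * indicator B y \<partial>K x \<partial>\<pi>)"
    using A B by (simp add: nn_integral_joint indicator_times)
  also have "\<dots> = (\<integral>\<^sup>+x. emeasure (K x) B * indicator A x \<partial>\<pi>)"
    using B by (intro nn_integral_cong) (simp add: nn_integral_cmult mult.commute)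
  finally show ?thesis .
qed

lemma nn_integral_joint_fst:
  assumes [measurable]: "u \<in> borel_measurable \<pi>"
  shows "(\<integral>\<^sup>+z. u (fst z) \<partial>joint) = (\<integral>\<^sup>+x. u x \<partial>\<pi>)"
proof -
  have "(\<integral>\<^sup>+z. u (fst z) \<partial>joint) = (\<integral>\<^sup>+x. \<integral>\<^sup>+y. u x \<partial>K x \<partial>\<pi>)"
    by (subst nn_integral_joint) auto
  also have "\<dots> = (\<integral>\<^sup>+x. u x \<partial>\<pi>)"
    by (intro nn_integral_cong) simp
  finally show ?thesis .
qed

lemma
  fixes G :: "'a \<times> 'a \<Rightarrow> real"
  assumes G[measurable]: "G \<in> borel_measurable (\<pi> \<Otimes>\<^sub>M \<pi>)" and nonneg: "\<And>z. G z \<ge> 0"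
    and finite_nn_integral: "(\<integral>\<^sup>+z. G z \<partial>joint) < \<infinity>"
  shows integral_joint_nonneg: "(\<integral>z. G z \<partial>joint) = (\<integral>x. \<integral>y. G (x, y) \<partial>K x \<partial>\<pi>)"
    and integrable_integral_kernel_nonneg: "integrable \<pi> (\<lambda>x. \<integral>y. G (x, y) \<partial>K x)"
    and AE_integrable_kernel_nonneg: "AE x in \<pi>. integrable (K x) (\<lambda>y. G (x, y))"
proof -
  define P where "P x = (\<integral>\<^sup>+y. ennreal (G (x, y)) \<partial>K x)" for x
  have [measurable]: "P \<in> borel_measurable \<pi>" unfolding P_def by measurable
  have P_joint: "(\<integral>\<^sup>+x. P x \<partial>\<pi>) = (\<integral>\<^sup>+z. G z \<partial>joint)"
    unfolding P_def by (subst nn_integral_joint) auto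
  have AE_finite: "AE x in \<pi>. P x \<noteq> \<infinity>"
    using P_joint finite_nn_integral by (intro nn_integral_PInf_AE) auto
  have integral_eq_P: "(\<integral>y. G (x, y) \<partial>K x) = enn2real (P x)" if "x \<in> space \<pi>" for x
    unfolding P_def using borel_measurable_kernel_slice[OF G that] nonneg
    by (subst integral_eq_nn_integral) auto
  have nn_eq_P: "(\<integral>\<^sup>+x. ennreal (\<integral>y. G (x, y) \<partial>K x) \<partial>\<pi>) = (\<integral>\<^sup>+x. P x \<partial>\<pi>)"
    using AE_finite by (intro nn_integral_cong_AE) (auto simp: integral_eq_P less_top)
  show "AE x in \<pi>. integrable (K x) (\<lambda>y. G (x, y))"
    using AE_finite
  proof (rule AE_mp, intro AE_I2 impI)
    fix x assume "x \<in> space \<pi>" and "P x \<noteq> \<infinity>"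
    then show "integrable (K x) (\<lambda>y. G (x, y))"
      using borel_measurable_kernel_slice[OF G] nonneg unfolding P_def
      by (subst integrable_iff_bounded) (auto simp: less_top)
  qed
  show "integrable \<pi> (\<lambda>x. \<integral>y. G (x, y) \<partial>K x)"
    using nn_eq_P P_joint finite_nn_integral nonneg
    by (subst integrable_iff_bounded) (auto simp: integral_nonneg)
  have "(\<integral>x. \<integral>y. G (x, y) \<partial>K x \<partial>\<pi>) = enn2real (\<integral>\<^sup>+x. ennreal (\<integral>y. G (x, y) \<partial>K x) \<partial>\<pi>)"
    using nonneg by (subst integral_eq_nn_integral) (auto intro: integral_nonneg)
  also have "\<dots> = (\<integral>z. G z \<partial>joint)"
    using nn_eq_P P_joint nonneg by (subst integral_eq_nn_integral) auto
  finally show "(\<integral>z. G z \<partial>joint) = (\<integral>x. \<integral>y. G (x, y) \<partial>K x \<partial>\<pi>)" ..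
qed

lemma integral_joint:
  fixes F :: "'a \<times> 'a \<Rightarrow> real"
  assumes [measurable]: "F \<in> borel_measurable (\<pi> \<Otimes>\<^sub>M \<pi>)" and F: "integrable joint F"
  shows "(\<integral>z. F z \<partial>joint) = (\<integral>x. \<integral>y. F (x, y) \<partial>K x \<partial>\<pi>)"
proof -
  define Fp where "Fp z = max 0 (F z)" for z
  define Fm where "Fm z = max 0 (- F z)" for z
  have Fp_measurable[measurable]: "Fp \<in> borel_measurable (\<pi> \<Otimes>\<^sub>M \<pi>)"
    and Fm_measurable[measurable]: "Fm \<in> borel_measurable (\<pi> \<Otimes>\<^sub>M \<pi>)"
    unfolding Fp_def Fm_def by measurable
  have Fp: "integrable joint Fp" and Fm: "integrable joint Fm"
    unfolding Fp_def Fm_def using F by (auto intro: integrable_max)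
  have Fp_finite: "(\<integral>\<^sup>+z. Fp z \<partial>joint) < \<infinity>" and Fm_finite: "(\<integral>\<^sup>+z. Fm z \<partial>joint) < \<infinity>"
    using integrableD(2)[OF Fp] integrableD(2)[OF Fm] by (simp_all add: Fp_def Fm_def less_top)
  have Fp_nonneg: "\<And>z. Fp z \<ge> 0" and Fm_nonneg: "\<And>z. Fm z \<ge> 0" by (auto simp: Fp_def Fm_def)
  note Fp_hyps = Fp_measurable Fp_nonneg Fp_finite and Fm_hyps = Fm_measurable Fm_nonneg Fm_finite
  note p = integral_joint_nonneg[OF Fp_hyps] integrable_integral_kernel_nonneg[OF Fp_hyps]
      AE_integrable_kernel_nonneg[OF Fp_hyps]
    and m = integral_joint_nonneg[OF Fm_hyps] integrable_integral_kernel_nonneg[OF Fm_hyps]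
      AE_integrable_kernel_nonneg[OF Fm_hyps]
  have F_eq: "F z = Fp z - Fm z" for z by (auto simp: Fp_def Fm_def)
  have "(\<integral>z. F z \<partial>joint) = (\<integral>z. Fp z \<partial>joint) - (\<integral>z. Fm z \<partial>joint)"
    unfolding F_eq by (rule Bochner_Integration.integral_diff[OF Fp Fm])
  also have "\<dots> = (\<integral>x. (\<integral>y. Fp (x, y) \<partial>K x) - (\<integral>y. Fm (x, y) \<partial>K x) \<partial>\<pi>)"
    using p(1,2) m(1,2) by (simp add: Bochner_Integration.integral_diff)
  also have "\<dots> = (\<integral>x. \<integral>y. F (x, y) \<partial>K x \<partial>\<pi>)"
  proof (rule integral_cong_AE)
    show "AE x in \<pi>. (\<integral>y. Fp (x, y) \<partial>K x) - (\<integral>y. Fm (x, y) \<partial>K x) = (\<integral>y. F (x, y) \<partial>K x)"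
      using p(3) m(3) by eventually_elim (simp add: F_eq Bochner_Integration.integral_diff)
  qed measurable
  finally show ?thesis .
qed

end

locale reversible_kernel = markov_kernel +
  assumes reversible: "reversible \<pi> K"
begin

lemma joint_swap: "distr joint (\<pi> \<Otimes>\<^sub>M \<pi>) (\<lambda>(x, y). (y, x)) = joint"
proof -
  let ?E = "{A \<times> B |A B. A \<in> sets \<pi> \<and> B \<in> sets \<pi>}" and ?\<Omega> = "space \<pi> \<times> space \<pi>"
  have "joint = distr joint (\<pi> \<Otimes>\<^sub>M \<pi>) (\<lambda>(x, y). (y, x))"
  proof (rule measure_eqI_generator_eq[OF Int_stable_pair_measure_generator[of \<pi> \<pi>],
        where \<Omega> = ?\<Omega> and A = "\<lambda>_. ?\<Omega>"])
    show "?E \<subseteq> Pow ?\<Omega>"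
      using sets.space_closed[of \<pi>] by auto
    show "sets joint = sigma_sets ?\<Omega> ?E"
      and "sets (distr joint (\<pi> \<Otimes>\<^sub>M \<pi>) (\<lambda>(x, y). (y, x))) = sigma_sets ?\<Omega> ?E"
      by (simp_all add: sets_pair_measure)
    show "range (\<lambda>_. ?\<Omega>) \<subseteq> ?E" and "(\<Union>i. ?\<Omega>) = ?\<Omega>" by auto
    have "emeasure joint ?\<Omega> = (\<integral>\<^sup>+x\<in>space \<pi>. emeasure (K x) (space \<pi>) \<partial>\<pi>)"
      by (simp add: emeasure_joint_Times)
    also have "\<dots> = (\<integral>\<^sup>+x. 1 \<partial>\<pi>)" by (intro nn_integral_cong) simp
    also have "\<dots> = 1" using prob_space.emeasure_space_1[OF prob_space] by simp
    finally show "\<And>i. emeasure joint ?\<Omega> \<noteq> \<infinity>" by simp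
  next
    fix X assume "X \<in> ?E"
    then obtain A B where X: "X = A \<times> B" and A: "A \<in> sets \<pi>" and B: "B \<in> sets \<pi>" by auto
    have "(\<lambda>(x, y). (y, x)) -` X \<inter> space joint = B \<times> A"
      using X sets.sets_into_space[OF A] sets.sets_into_space[OF B] by auto
    then have "emeasure (distr joint (\<pi> \<Otimes>\<^sub>M \<pi>) (\<lambda>(x, y). (y, x))) X = emeasure joint (B \<times> A)"
      using A B X by (subst emeasure_distr[OF swap_measurable]) auto
    also have "\<dots> = emeasure joint X"
      using reversible A B X unfolding reversible_def by (simp add: emeasure_joint_Times)
    finally show "emeasure joint X = emeasure (distr joint (\<pi> \<Otimes>\<^sub>M \<pi>) (\<lambda>(x, y). (y, x))) X" ..
  qed
  then show ?thesis ..
qed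

lemma nn_integral_joint_swap:
  assumes [measurable]: "F \<in> borel_measurable (\<pi> \<Otimes>\<^sub>M \<pi>)"
  shows "(\<integral>\<^sup>+z. F z \<partial>joint) = (\<integral>\<^sup>+z. F (snd z, fst z) \<partial>joint)"
proof -
  have "(\<integral>\<^sup>+z. F z \<partial>joint) = (\<integral>\<^sup>+z. F z \<partial>distr joint (\<pi> \<Otimes>\<^sub>M \<pi>) (\<lambda>(x, y). (y, x)))"
    by (simp add: joint_swap)
  also have "\<dots> = (\<integral>\<^sup>+z. F (snd z, fst z) \<partial>joint)"
    by (subst nn_integral_distr) (simp_all add: split_beta)
  finally show ?thesis .
qed

lemma integral_joint_swap:
  fixes F :: "'a \<times> 'a \<Rightarrow> real"
  assumes [measurable]: "F \<in> borel_measurable (\<pi> \<Otimes>\<^sub>M \<pi>)"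
  shows "(\<integral>z. F z \<partial>joint) = (\<integral>z. F (snd z, fst z) \<partial>joint)"
proof -
  have "(\<integral>z. F z \<partial>joint) = (\<integral>z. F z \<partial>distr joint (\<pi> \<Otimes>\<^sub>M \<pi>) (\<lambda>(x, y). (y, x)))"
    by (simp add: joint_swap)
  also have "\<dots> = (\<integral>z. F (snd z, fst z) \<partial>joint)"
    by (subst integral_distr) (simp_all add: split_beta)
  finally show ?thesis .
qed

lemma nn_integral_joint_snd:
  assumes [measurable]: "u \<in> borel_measurable \<pi>"
  shows "(\<integral>\<^sup>+z. u (snd z) \<partial>joint) = (\<integral>\<^sup>+x. u x \<partial>\<pi>)"
  using nn_integral_joint_swap[of "\<lambda>z. u (snd z)"] nn_integral_joint_fst[OF assms] by simp

lemma square_integrable_markov_op: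
  assumes [measurable]: "g \<in> borel_measurable \<pi>" and g2: "integrable \<pi> (\<lambda>x. (g x)\<^sup>2)"
  shows "integrable \<pi> (\<lambda>x. (markov_op K g x)\<^sup>2)"
proof (subst integrable_iff_bounded, intro conjI)
  show "(\<lambda>x. (markov_op K g x)\<^sup>2) \<in> borel_measurable \<pi>" by measurable
  have "(\<integral>\<^sup>+x. ennreal (norm ((markov_op K g x)\<^sup>2)) \<partial>\<pi>) \<le> (\<integral>\<^sup>+x. \<integral>\<^sup>+y. ennreal ((g y)\<^sup>2) \<partial>K x \<partial>\<pi>)"
    by (intro nn_integral_mono) (simp add: markov_op_square_le)
  also have "\<dots> = (\<integral>\<^sup>+x. ennreal ((g x)\<^sup>2) \<partial>\<pi>)"
    using nn_integral_joint[of "\<lambda>z. ennreal ((g (snd z))\<^sup>2)"]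
      nn_integral_joint_snd[of "\<lambda>x. ennreal ((g x)\<^sup>2)"] by simp
  also have "\<dots> < \<infinity>" using integrableD(2)[OF g2] by (simp add: less_top)
  finally show "(\<integral>\<^sup>+x. ennreal (norm ((markov_op K g x)\<^sup>2)) \<partial>\<pi>) < \<infinity>" .
qed

lemma integrable_joint_mult:
  fixes g h :: "'a \<Rightarrow> real"
  assumes [measurable]: "g \<in> borel_measurable \<pi>" "h \<in> borel_measurable \<pi>"
    and g2: "integrable \<pi> (\<lambda>x. (g x)\<^sup>2)" and h2: "integrable \<pi> (\<lambda>x. (h x)\<^sup>2)"
  shows "integrable joint (\<lambda>z. g (fst z) * h (snd z))"
proof (subst integrable_iff_bounded, intro conjI)
  show "(\<lambda>z. g (fst z) * h (snd z)) \<in> borel_measurable joint"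
    by (simp add: measurable_cong_sets[OF sets_joint refl])
  have "(\<integral>\<^sup>+z. ennreal \<bar>g (fst z)\<bar> * ennreal \<bar>h (snd z)\<bar> \<partial>joint)\<^sup>2
      \<le> (\<integral>\<^sup>+z. ennreal \<bar>g (fst z)\<bar> ^ 2 \<partial>joint) * (\<integral>\<^sup>+z. ennreal \<bar>h (snd z)\<bar> ^ 2 \<partial>joint)"
    by (rule Cauchy_Schwarz_nn_integral) (auto simp: measurable_cong_sets[OF sets_joint refl])
  also have "\<dots> = (\<integral>\<^sup>+x. ennreal ((g x)\<^sup>2) \<partial>\<pi>) * (\<integral>\<^sup>+x. ennreal ((h x)\<^sup>2) \<partial>\<pi>)"
    using nn_integral_joint_fst[of "\<lambda>x. ennreal ((g x)\<^sup>2)"]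
      nn_integral_joint_snd[of "\<lambda>x. ennreal ((h x)\<^sup>2)"] by (simp add: ennreal_power)
  also have "\<dots> < \<infinity>"
    using integrableD(2)[OF g2] integrableD(2)[OF h2] by (simp add: ennreal_mult_less_top less_top)
  finally show "(\<integral>\<^sup>+z. ennreal (norm (g (fst z) * h (snd z))) \<partial>joint) < \<infinity>"
    by (simp add: abs_mult ennreal_mult power_less_top_ennreal)
qed

lemma markov_op_self_adjoint:
  fixes g h :: "'a \<Rightarrow> real"
  assumes [measurable]: "g \<in> borel_measurable \<pi>" "h \<in> borel_measurable \<pi>"
    and g2: "integrable \<pi> (\<lambda>x. (g x)\<^sup>2)" and h2: "integrable \<pi> (\<lambda>x. (h x)\<^sup>2)"
  shows "(\<integral>x. g x * markov_op K h x \<partial>\<pi>) = (\<integral>x. markov_op K g x * h x \<partial>\<pi>)"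
proof -
  have "(\<integral>x. g x * markov_op K h x \<partial>\<pi>) = (\<integral>z. g (fst z) * h (snd z) \<partial>joint)"
    using integrable_joint_mult[OF assms] by (simp add: integral_joint markov_op_def)
  also have "\<dots> = (\<integral>z. h (fst z) * g (snd z) \<partial>joint)"
    by (subst integral_joint_swap) (simp_all add: mult.commute)
  also have "\<dots> = (\<integral>x. markov_op K g x * h x \<partial>\<pi>)"
    using integrable_joint_mult[OF assms(2,1) h2 g2] by (simp add: integral_joint markov_op_def mult.commute)
  finally show ?thesis .
qed

lemma markov_op_power_measurable[measurable]:
  assumes [measurable]: "g \<in> borel_measurable \<pi>"
  shows "(markov_op K ^^ k) g \<in> borel_measurable \<pi>"
  by (induction k) simp_all

lemma square_integrable_markov_op_power:
  assumes "g \<in> borel_measurable \<pi>" and "integrable \<pi> (\<lambda>x. (g x)\<^sup>2)"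
  shows "integrable \<pi> (\<lambda>x. ((markov_op K ^^ k) g x)\<^sup>2)"
  using assms by (induction k) (simp_all add: square_integrable_markov_op)

lemma l2_norm_sq_markov_op_power_log_convex:
  assumes [measurable]: "g \<in> borel_measurable \<pi>" and g2: "integrable \<pi> (\<lambda>x. (g x)\<^sup>2)"
  defines "c k \<equiv> l2_norm_sq \<pi> ((markov_op K ^^ k) g)"
  shows "(c (Suc k))\<^sup>2 \<le> c k * c (Suc (Suc k))"
proof -
  let ?g = "\<lambda>k. (markov_op K ^^ k) g"
  note square_integrable = square_integrable_markov_op_power[OF assms(1) g2]
  have "c (Suc k) = (\<integral>x. markov_op K (?g k) x * ?g (Suc k) x \<partial>\<pi>)"
    unfolding c_def l2_norm_sq_def by (simp add: power2_eq_square)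
  also have "\<dots> = (\<integral>x. ?g k x * ?g (Suc (Suc k)) x \<partial>\<pi>)"
    using square_integrable[of k] square_integrable[of "Suc k"]
    by (subst markov_op_self_adjoint[symmetric]) simp_all
  finally have "(c (Suc k))\<^sup>2 = (\<integral>x. ?g k x * ?g (Suc (Suc k)) x \<partial>\<pi>)\<^sup>2" by simp
  also have "\<dots> \<le> c k * c (Suc (Suc k))"
    unfolding c_def l2_norm_sq_def
    using square_integrable[of k] square_integrable[of "Suc (Suc k)"] by (intro Cauchy_Schwarz_integral) simp_all
  finally show ?thesis .
qed

end

theorem lemma7:
  fixes \<pi> :: "'a measure" and K :: "'a \<Rightarrow> 'a measure" and f :: "'a \<Rightarrow> real" and n :: nat
  assumes "prob_space \<pi>"
    and "K \<in> \<pi> \<rightarrow>\<^sub>M prob_algebra \<pi>"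
    and "reversible \<pi> K"
    and "f \<in> borel_measurable \<pi>"
    and "integrable \<pi> (\<lambda>x. (f x)\<^sup>2)"
    and "l2_norm_sq \<pi> f \<noteq> 0"
    and "n \<ge> 1"
  shows "l2_norm_sq \<pi> ((markov_op K ^^ n) f) / l2_norm_sq \<pi> f
           \<ge> (l2_norm_sq \<pi> (markov_op K f) / l2_norm_sq \<pi> f) ^ n"
proof -
  interpret reversible_kernel \<pi> K
    using assms(1-3) by (simp add: reversible_kernel_def reversible_kernel_axioms_def markov_kernel_def)
  define c where "c k = l2_norm_sq \<pi> ((markov_op K ^^ k) f)" for k
  have "(c 1 / c 0) ^ n \<le> c n / c 0"
  proof (rule log_convex_seq_ratio_power_le)
    show "c k \<ge> 0" for k unfolding c_def l2_norm_sq_def by simp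
    show "(c (Suc k))\<^sup>2 \<le> c k * c (Suc (Suc k))" for k
      unfolding c_def using assms(4,5) by (rule l2_norm_sq_markov_op_power_log_convex)
  qed (use assms(6,7) in \<open>simp_all add: c_def\<close>)
  then show ?thesis by (simp add: c_def)
qed

end
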